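(* Let $L$ be an LP in standard form: minimize $c^{\top}x$ subject to $Ax=b$, $Bx\le d$, $x\in\mathbb{R}^n$, with feasible set $\mathcal{F}$, and let $H$ be a subgroup of $G^{\rm Null}_{(A,B,d,c)}$. Let $\mathrm{Fix}_H(\mathbb{R}^n)=\{x\in\mathbb{R}^n: h(x)=x \text{ for all } h\in H\}$ and $\mathcal{T}=\mathcal{F}\cap \mathrm{Fix}_H(\mathbb{R}^n)$. Then $\mathcal{T}$ is non-empty if and only if $H$ is a subgroup of $G(A,b,B,d,c)^{\rm LP}$.
   Context: Here $A\in\mathbb{R}^{m\times n}$, $b\in\mathbb{R}^m$, $B\in\mathbb{R}^{m'\times n}$, $d\in\mathbb{R}^{m'}$, $c\in\mathbb{R}^n$. A constraint is redundant if deleting it does not change the feasible set. $L$ is in standard form if $\mathcal{F}\neq\emptyset$, $L$ has no redundant (equality or inequality) constraints, and none of the inequalities in $Bx\le d$ is satisfied with equality by every point of $\mathcal{F}$. $S_n$ acts on $\mathbb{R}^n$ by $\pi(x)=(x_{\pi^{-1}(1)},\dots,x_{\pi^{-1}(n)})^{\top}$, and $\Pi$ is the permutation matrix with $\Pi x=\pi(x)$. Define $G^{\rm LP}=\{\pi\in S_n: \pi(x)\in\mathcal{F}\text{ and } c^{\top}\pi(x)=c^{\top}x \text{ for all } x\in\mathcal{F}\}$ and $G(A,b,B,d,c)^{\rm LP}=\{\pi\in G^{\rm LP}:\pi(c)=c\}$. Let $G(B,d,c)$ be the set of $\pi\in S_n$ with $\pi(c)=c$ for which there exists a permutation $\sigma$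 of $\{1,\dots,m'\}$ with $B_{\sigma(i),\pi(j)}=B_{ij}$ and $d_{\sigma(i)}=d_i$ for all $i,j$ (if $B$ is empty, $G(B,d,c)=\{\pi:\pi(c)=c\}$). Let $\mathrm{Stab}(\mathrm{Row}(A))=\{\pi\in S_n:\Pi v\in\mathrm{Row}(A)\ \forall v\in\mathrm{Row}(A)\}$, where $\mathrm{Row}(A)\subseteq\mathbb{R}^n$ is the row space of $A$, and $G^{\rm Null}_{(A,B,d,c)}=\mathrm{Stab}(\mathrm{Row}(A))\cap G(B,d,c)$. *)

theory Defs
  imports "HOL-Analysis.Analysis" "HOL-Algebra.Bij"
begin

text \<open>Columns (variables) are indexed by a finite type 'n, so R^n is real^'n.
Rows of A (resp. B) are given as functions nat => real^'n, of which the
first m (resp. m') are the constraints; this allows empty A or B.\<close>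

definition perm_act :: "('n::finite \<Rightarrow> 'n) \<Rightarrow> real^'n \<Rightarrow> real^'n" where
  "perm_act p x = (\<chi> i. x $ (inv_into UNIV p i))"

definition feasible ::
  "nat \<Rightarrow> (nat \<Rightarrow> real^'n::finite) \<Rightarrow> (nat \<Rightarrow> real) \<Rightarrow>
   nat \<Rightarrow> (nat \<Rightarrow> real^'n) \<Rightarrow> (nat \<Rightarrow> real) \<Rightarrow> (real^'n) set" where
  "feasible m A b m' B d =
     {x. (\<forall>i<m. A i \<bullet> x = b i) \<and> (\<forall>i<m'. B i \<bullet> x \<le> d i)}"

definition feasible_del_eq ::
  "nat \<Rightarrow> nat \<Rightarrow> (nat \<Rightarrow> real^'n::finite) \<Rightarrow> (nat \<Rightarrow> real) \<Rightarrow>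
   nat \<Rightarrow> (nat \<Rightarrow> real^'n) \<Rightarrow> (nat \<Rightarrow> real) \<Rightarrow> (real^'n) set" where
  "feasible_del_eq k m A b m' B d =
     {x. (\<forall>i<m. i \<noteq> k \<longrightarrow> A i \<bullet> x = b i) \<and> (\<forall>i<m'. B i \<bullet> x \<le> d i)}"

definition feasible_del_ineq ::
  "nat \<Rightarrow> nat \<Rightarrow> (nat \<Rightarrow> real^'n::finite) \<Rightarrow> (nat \<Rightarrow> real) \<Rightarrow>
   nat \<Rightarrow> (nat \<Rightarrow> real^'n) \<Rightarrow> (nat \<Rightarrow> real) \<Rightarrow> (real^'n) set" where
  "feasible_del_ineq k m A b m' B d =
     {x. (\<forall>i<m. A i \<bullet> x = b i) \<and> (\<forall>i<m'. i \<noteq> k \<longrightarrow> B i \<bullet> x \<le> d i)}"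

definition standard_form ::
  "nat \<Rightarrow> (nat \<Rightarrow> real^'n::finite) \<Rightarrow> (nat \<Rightarrow> real) \<Rightarrow>
   nat \<Rightarrow> (nat \<Rightarrow> real^'n) \<Rightarrow> (nat \<Rightarrow> real) \<Rightarrow> bool" where
  "standard_form m A b m' B d \<longleftrightarrow>
     feasible m A b m' B d \<noteq> {} \<and>
     (\<forall>k<m. feasible_del_eq k m A b m' B d \<noteq> feasible m A b m' B d) \<and>
     (\<forall>k<m'. feasible_del_ineq k m A b m' B d \<noteq> feasible m A b m' B d) \<and>
     (\<forall>k<m'. \<exists>x\<in>feasible m A b m' B d. B k \<bullet> x < d k)"

definition G_LP ::
  "nat \<Rightarrow> (nat \<Rightarrow> real^'n::finite) \<Rightarrow> (nat \<Rightarrow> real) \<Rightarrow>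
   nat \<Rightarrow> (nat \<Rightarrow> real^'n) \<Rightarrow> (nat \<Rightarrow> real) \<Rightarrow> real^'n \<Rightarrow> ('n \<Rightarrow> 'n) set" where
  "G_LP m A b m' B d c =
     {p. p permutes UNIV \<and>
         (\<forall>x\<in>feasible m A b m' B d. perm_act p x \<in> feasible m A b m' B d \<and>
                                     c \<bullet> perm_act p x = c \<bullet> x)}"

definition G_LP_c ::
  "nat \<Rightarrow> (nat \<Rightarrow> real^'n::finite) \<Rightarrow> (nat \<Rightarrow> real) \<Rightarrow>
   nat \<Rightarrow> (nat \<Rightarrow> real^'n) \<Rightarrow> (nat \<Rightarrow> real) \<Rightarrow> real^'n \<Rightarrow> ('n \<Rightarrow> 'n) set" where
  "G_LP_c m A b m' B d c = {p \<in> G_LP m A b m' B d c. perm_act p c = c}"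

definition G_Bdc ::
  "nat \<Rightarrow> (nat \<Rightarrow> real^'n::finite) \<Rightarrow> (nat \<Rightarrow> real) \<Rightarrow> real^'n \<Rightarrow> ('n \<Rightarrow> 'n) set" where
  "G_Bdc m' B d c =
     {p. p permutes UNIV \<and> perm_act p c = c \<and>
         (\<exists>\<sigma>. \<sigma> permutes {..<m'} \<and>
              (\<forall>i<m'. d (\<sigma> i) = d i \<and> (\<forall>j. B (\<sigma> i) $ (p j) = B i $ j)))}"

definition row_space :: "nat \<Rightarrow> (nat \<Rightarrow> real^'n::finite) \<Rightarrow> (real^'n) set" where
  "row_space m A = span (A ` {..<m})"

definition Stab_Row :: "nat \<Rightarrow> (nat \<Rightarrow> real^'n::finite) \<Rightarrow> ('n \<Rightarrow> 'n) set" where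
  "Stab_Row m A = {p. p permutes UNIV \<and> (\<forall>v\<in>row_space m A. perm_act p v \<in> row_space m A)}"

definition G_Null ::
  "nat \<Rightarrow> (nat \<Rightarrow> real^'n::finite) \<Rightarrow> nat \<Rightarrow> (nat \<Rightarrow> real^'n) \<Rightarrow> (nat \<Rightarrow> real) \<Rightarrow>
   real^'n \<Rightarrow> ('n \<Rightarrow> 'n) set" where
  "G_Null m A m' B d c = Stab_Row m A \<inter> G_Bdc m' B d c"

definition Fix_set :: "('n::finite \<Rightarrow> 'n) set \<Rightarrow> (real^'n) set" where
  "Fix_set H = {x. \<forall>h\<in>H. perm_act h x = x}"

abbreviation Sym :: "('n::finite \<Rightarrow> 'n) monoid" where
  "Sym \<equiv> BijGroup (UNIV :: 'n set)"

end

theory Submission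
  imports Defs
begin

text \<open>If a feasible point \<open>x\<^sub>0\<close> is fixed by \<open>H\<close>, every \<open>h \<in> H\<close> maps the feasible set into
itself: \<open>h\<close> permutes the rows of \<open>(B, d)\<close>, and \<open>A\<^sub>i \<bullet> h y = h\<^sup>-\<^sup>1 A\<^sub>i \<bullet> y\<close> where \<open>h\<^sup>-\<^sup>1 A\<^sub>i\<close>
lies in \<open>Row(A)\<close> (an injective linear self-map of a finite-dimensional space is onto), so
it takes the same value at \<open>y\<close> and at \<open>x\<^sub>0 = h x\<^sub>0\<close>. Conversely, if \<open>H\<close> preserves the feasible
set, averaging the \<open>H\<close>-orbit of a feasible point (the Reynolds operator) gives, by
convexity, a feasible point fixed by \<open>H\<close>.\<close>

lemma (in group) finite_submonoid_is_subgroup: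
  assumes "submonoid H G" and "finite H"
  shows "subgroup H G"
proof (rule submonoid_subgroupI[OF assms(1)])
  fix a assume a: "a \<in> H"
  have H_carrier: "H \<subseteq> carrier G"
    using assms(1) by (rule submonoid.subset)
  then have a_carrier: "a \<in> carrier G"
    using a by blast
  have image: "(\<lambda>x. a \<otimes> x) ` H = H"
  proof (rule endo_inj_surj[OF assms(2)])
    show "(\<lambda>x. a \<otimes> x) ` H \<subseteq> H"
      using a submonoid.m_closed[OF assms(1)] by blast
    show "inj_on (\<lambda>x. a \<otimes> x) H"
      using inj_on_subset[OF inj_on_cmult[OF a_carrier] H_carrier] .
  qed
  have "\<one> \<in> (\<lambda>x. a \<otimes> x) ` H"
    unfolding image by (rule submonoid.one_closed[OF assms(1)])
  then obtain y where y: "y \<in> H" "\<one> = a \<otimes> y"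
    by (rule imageE)
  then have "y \<otimes> a = \<one>"
    using inv_comm[of a y] a_carrier y H_carrier by auto
  then have "inv a = y"
    using inv_equality[of y a] a_carrier y(1) H_carrier by auto
  then show "inv a \<in> H"
    using y(1) by simp
qed

text \<open>Finiteness of \<open>H\<close> is essential: the inverse of \<open>G\<lparr>carrier := S\<rparr>\<close> is a description
over \<open>S\<close>, which is junk whenever the inverse in \<open>G\<close> lies outside \<open>S\<close>.\<close>

lemma (in group) subgroup_carrier_update_iff:
  assumes "S \<subseteq> carrier G" and "finite H"
  shows "subgroup H (G\<lparr>carrier := S\<rparr>) \<longleftrightarrow> H \<subseteq> S \<and> subgroup H G"
proof
  assume sub: "subgroup H (G\<lparr>carrier := S\<rparr>)"
  then have HS: "H \<subseteq> S"
    using subgroup.subset by fastforce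
  have "submonoid H G"
    using sub HS assms(1) by (auto simp: submonoid_def subgroup_def)
  then show "H \<subseteq> S \<and> subgroup H G"
    using HS finite_submonoid_is_subgroup assms(2) by blast
next
  assume "H \<subseteq> S \<and> subgroup H G"
  then have HS: "H \<subseteq> S" and sub: "subgroup H G"
    by auto
  have inv_eq: "inv\<^bsub>G\<lparr>carrier := S\<rparr>\<^esub> x = inv x" if x: "x \<in> H" for x
    unfolding m_inv_def[of "G\<lparr>carrier := S\<rparr>"]
  proof (rule the_equality)
    have "x \<in> carrier G"
      using x HS assms(1) by blast
    moreover have "inv x \<in> S"
      using subgroup.m_inv_closed[OF sub x] HS by blast
    ultimately show "inv x \<in> carrier (G\<lparr>carrier := S\<rparr>) \<and>
        x \<otimes>\<^bsub>G\<lparr>carrier := S\<rparr>\<^esub> inv x = \<one>\<^bsub>G\<lparr>carrier := S\<rparr>\<^esub> \<and>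
        inv x \<otimes>\<^bsub>G\<lparr>carrier := S\<rparr>\<^esub> x = \<one>\<^bsub>G\<lparr>carrier := S\<rparr>\<^esub>"
      by simp
  next
    fix y
    assume "y \<in> carrier (G\<lparr>carrier := S\<rparr>) \<and>
        x \<otimes>\<^bsub>G\<lparr>carrier := S\<rparr>\<^esub> y = \<one>\<^bsub>G\<lparr>carrier := S\<rparr>\<^esub> \<and>
        y \<otimes>\<^bsub>G\<lparr>carrier := S\<rparr>\<^esub> x = \<one>\<^bsub>G\<lparr>carrier := S\<rparr>\<^esub>"
    then have "y \<in> carrier G" "y \<otimes> x = \<one>"
      using assms(1) by auto
    moreover have "x \<in> carrier G"
      using x HS assms(1) by blast
    ultimately show "y = inv x"
      by (simp add: inv_equality)
  qed
  show "subgroup H (G\<lparr>carrier := S\<rparr>)"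
  proof
    show "H \<subseteq> carrier (G\<lparr>carrier := S\<rparr>)"
      using HS by simp
  next
    fix x y
    assume "x \<in> H" "y \<in> H"
    then show "x \<otimes>\<^bsub>G\<lparr>carrier := S\<rparr>\<^esub> y \<in> H"
      using sub by (simp add: subgroup.m_closed)
  next
    show "\<one>\<^bsub>G\<lparr>carrier := S\<rparr>\<^esub> \<in> H"
      using sub by (simp add: subgroup.one_closed)
  next
    fix x
    assume "x \<in> H"
    then show "inv\<^bsub>G\<lparr>carrier := S\<rparr>\<^esub> x \<in> H"
      using sub inv_eq by (simp add: subgroup.m_inv_closed)
  qed
qed

lemma Bij_UNIV: "Bij UNIV = {p. p permutes UNIV}"
  by (auto simp: Bij_def permutes_bij intro: bij_imp_permutes)

lemma carrier_Sym: "carrier Sym = {p. p permutes UNIV}"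
  by (simp add: BijGroup_def Bij_UNIV)

lemma mult_Sym:
  assumes "p permutes UNIV" and "q permutes UNIV"
  shows "p \<otimes>\<^bsub>Sym\<^esub> q = p \<circ> q"
  using assms by (simp add: BijGroup_def Bij_UNIV compose_def comp_def restrict_UNIV)

lemma subgroup_Sym_carrier_update_iff:
  fixes H S :: "('n::finite \<Rightarrow> 'n) set"
  assumes "S \<subseteq> {p. p permutes UNIV}"
  shows "subgroup H (Sym\<lparr>carrier := S\<rparr>) \<longleftrightarrow> H \<subseteq> S \<and> subgroup H Sym"
  using group.subgroup_carrier_update_iff[OF group_BijGroup[of "UNIV :: 'n set"]] assms
  by (simp add: carrier_Sym)

lemma perm_act_id: "perm_act id x = x"
  by (simp add: perm_act_def vec_eq_iff inv_id)

lemma perm_act_compose: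
  assumes "p permutes UNIV" and "q permutes UNIV"
  shows "perm_act (p \<circ> q) x = perm_act p (perm_act q x)"
  using assms by (simp add: perm_act_def vec_eq_iff o_inv_distrib permutes_bij)

lemma perm_act_inv_cancel:
  assumes "p permutes UNIV"
  shows "perm_act (inv_into UNIV p) (perm_act p x) = x"
    and "perm_act p (perm_act (inv_into UNIV p) x) = x"
  using perm_act_compose[OF permutes_inv[OF assms] assms, of x]
    perm_act_compose[OF assms permutes_inv[OF assms], of x]
  by (simp_all add: permutes_inv_o[OF assms] perm_act_id)

lemma linear_perm_act: "linear (perm_act p)"
  by (rule linearI) (simp_all add: perm_act_def vec_eq_iff)

lemma inner_perm_act:
  assumes "p permutes UNIV"
  shows "perm_act p a \<bullet> perm_act p x = a \<bullet> x"
proof -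
  have "perm_act p a \<bullet> perm_act p x = (\<Sum>i\<in>UNIV. ((\<lambda>j. a $ j * x $ j) \<circ> inv_into UNIV p) i)"
    by (simp add: inner_vec_def perm_act_def)
  also have "\<dots> = (\<Sum>j\<in>UNIV. a $ j * x $ j)"
    using sum.permute[OF permutes_inv[OF assms], symmetric] by simp
  finally show ?thesis
    by (simp add: inner_vec_def)
qed

lemma inner_perm_act_right:
  assumes "p permutes UNIV"
  shows "a \<bullet> perm_act p x = perm_act (inv_into UNIV p) a \<bullet> x"
  using inner_perm_act[OF assms, of "perm_act (inv_into UNIV p) a" x]
  by (simp add: perm_act_inv_cancel[OF assms])

lemma inv_mem_Stab_Row:
  assumes "p \<in> Stab_Row m A"
  shows "inv_into UNIV p \<in> Stab_Row m A"
proof -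
  let ?V = "row_space m A"
  have p: "p permutes UNIV" and into: "perm_act p ` ?V \<subseteq> ?V"
    using assms by (auto simp: Stab_Row_def)
  have V: "subspace ?V"
    by (simp add: row_space_def)
  have "inj (perm_act p)"
    by (rule inj_on_inverseI[where g = "perm_act (inv_into UNIV p)"])
      (simp add: perm_act_inv_cancel(1)[OF p])
  then have "dim (perm_act p ` ?V) = dim ?V"
    by (rule dim_image_eq[OF linear_perm_act inj_on_subset[OF _ subset_UNIV]])
  then have "dim ?V \<le> dim (perm_act p ` ?V)"
    by simp
  then have onto: "perm_act p ` ?V = ?V"
    by (rule subspace_dim_equal[OF linear_subspace_image[OF linear_perm_act V] V into])
  have "perm_act (inv_into UNIV p) v \<in> ?V" if "v \<in> ?V" for v
  proof -
    have "v \<in> perm_act p ` ?V"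
      by (subst onto) (rule that)
    then obtain w where "v = perm_act p w" "w \<in> ?V"
      by (rule imageE)
    then show ?thesis
      by (simp add: perm_act_inv_cancel(1)[OF p])
  qed
  then show ?thesis
    using permutes_inv[OF p] by (simp add: Stab_Row_def)
qed

lemma convex_feasible: "convex (feasible m A b m' B d)"
proof -
  have "feasible m A b m' B d = (\<Inter>i<m. {x. A i \<bullet> x = b i}) \<inter> (\<Inter>i<m'. {x. B i \<bullet> x \<le> d i})"
    by (auto simp: feasible_def)
  then show ?thesis
    by (simp add: convex_Int convex_INT convex_hyperplane convex_halfspace_le)
qed

lemma row_space_inner_eq_on_feasible:
  assumes "v \<in> row_space m A" and "y \<in> feasible m A b m' B d" and "z \<in> feasible m A b m' B d"
  shows "v \<bullet> y = v \<bullet> z"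
proof -
  have "orthogonal (y - z) v"
  proof (rule orthogonal_to_span)
    show "v \<in> span (A ` {..<m})"
      using assms(1) by (simp add: row_space_def)
  next
    fix w
    assume "w \<in> A ` {..<m}"
    then show "orthogonal (y - z) w"
      using assms(2,3) by (auto simp: orthogonal_def feasible_def inner_diff_left inner_diff_right inner_commute)
  qed
  then show ?thesis
    by (simp add: orthogonal_def inner_diff_left inner_diff_right inner_commute)
qed

lemma Stab_Row_preserves_equalities:
  assumes "p \<in> Stab_Row m A" and "x\<^sub>0 \<in> feasible m A b m' B d" and "perm_act p x\<^sub>0 = x\<^sub>0"
    and "y \<in> feasible m A b m' B d" and "i < m"
  shows "A i \<bullet> perm_act p y = b i"
proof -
  have p: "p permutes UNIV"
    using assms(1) by (simp add: Stab_Row_def)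
  have "A i \<in> row_space m A"
    using assms(5) by (simp add: row_space_def span_base)
  then have "perm_act (inv_into UNIV p) (A i) \<in> row_space m A"
    using inv_mem_Stab_Row[OF assms(1)] by (simp add: Stab_Row_def)
  then have "A i \<bullet> perm_act p y = A i \<bullet> perm_act p x\<^sub>0"
    using row_space_inner_eq_on_feasible assms(2,4) by (simp add: inner_perm_act_right[OF p])
  also have "\<dots> = b i"
    using assms(2,3,5) by (simp add: feasible_def)
  finally show ?thesis .
qed

lemma G_Bdc_preserves_inequalities:
  assumes "p \<in> G_Bdc m' B d c" and "\<forall>i<m'. B i \<bullet> y \<le> d i" and "i < m'"
  shows "B i \<bullet> perm_act p y \<le> d i"
proof -
  obtain \<sigma> where \<sigma>: "\<sigma> permutes {..<m'}"
    and rows: "\<And>i. i < m' \<Longrightarrow> d (\<sigma> i) = d i \<and> (\<forall>j. B (\<sigma> i) $ p j = B i $ j)"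
    and p: "p permutes UNIV"
    using assms(1) by (auto simp: G_Bdc_def)
  obtain k where k: "k < m'" "\<sigma> k = i"
    using permutes_image[OF \<sigma>] assms(3) by (metis imageE lessThan_iff)
  have "B i = perm_act p (B k)"
    unfolding vec_eq_iff
  proof
    fix j
    have "B i $ p (inv_into UNIV p j) = B k $ inv_into UNIV p j"
      using rows[OF k(1)] k(2) by blast
    then show "B i $ j = perm_act p (B k) $ j"
      by (simp add: perm_act_def permutes_inverses[OF p])
  qed
  then have "B i \<bullet> perm_act p y = B k \<bullet> y"
    by (simp add: inner_perm_act[OF p])
  also have "\<dots> \<le> d k"
    using assms(2) k(1) by blast
  also have "\<dots> = d i"
    using rows[OF k(1)] k(2) by simp
  finally show ?thesis .
qed

lemma G_Null_fixing_feasible_point_mem_G_LP_c: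
  assumes "p \<in> G_Null m A m' B d c" and "x\<^sub>0 \<in> feasible m A b m' B d" and "perm_act p x\<^sub>0 = x\<^sub>0"
  shows "p \<in> G_LP_c m A b m' B d c"
proof -
  have stab: "p \<in> Stab_Row m A" and bdc: "p \<in> G_Bdc m' B d c"
    using assms(1) by (auto simp: G_Null_def)
  then have p: "p permutes UNIV" and c: "perm_act p c = c"
    by (auto simp: G_Bdc_def)
  have "perm_act p y \<in> feasible m A b m' B d" if "y \<in> feasible m A b m' B d" for y
    using Stab_Row_preserves_equalities[OF stab assms(2,3) that] G_Bdc_preserves_inequalities[OF bdc] that
    by (simp add: feasible_def)
  moreover have "c \<bullet> perm_act p y = c \<bullet> y" for y
    using inner_perm_act[OF p, of c y] c by simp
  ultimately show ?thesis
    using p c by (simp add: G_LP_c_def G_LP_def)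
qed

definition reynolds :: "('n::finite \<Rightarrow> 'n) set \<Rightarrow> real^'n \<Rightarrow> real^'n" where
  "reynolds H x = (1 / real (card H)) *\<^sub>R (\<Sum>h\<in>H. perm_act h x)"

lemma reynolds_mem_convex:
  assumes "convex S" and "H \<noteq> {}" and "\<And>h. h \<in> H \<Longrightarrow> perm_act h x \<in> S"
  shows "reynolds H x \<in> S"
proof -
  have "(\<Sum>h\<in>H. (1 / real (card H)) *\<^sub>R perm_act h x) \<in> S"
    by (rule convex_sum) (use assms in \<open>auto simp: card_gt_0_iff\<close>)
  then show ?thesis
    by (simp add: reynolds_def scaleR_sum_right)
qed

lemma perm_act_reynolds:
  assumes "subgroup H Sym" and "g \<in> H"
  shows "perm_act g (reynolds H x) = reynolds H x"
proof -
  have perms: "h permutes UNIV" if "h \<in> H" for h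
    using that subgroup.subset[OF assms(1)] carrier_Sym by blast
  have closed: "g \<circ> h \<in> H" if "h \<in> H" for h
    using subgroup.m_closed[OF assms(1) assms(2) that] by (simp add: mult_Sym perms assms(2) that)
  have "inj_on (\<lambda>h. g \<circ> h) H"
  proof (rule inj_onI)
    fix h h'
    assume "g \<circ> h = g \<circ> h'"
    then show "h = h'"
      using permutes_inj[OF perms[OF assms(2)]] by (simp add: fun_eq_iff inj_eq)
  qed
  then have bij: "bij_betw (\<lambda>h. g \<circ> h) H H"
    using endo_inj_surj[of H "\<lambda>h. g \<circ> h"] closed by (auto simp: bij_betw_def)
  have "perm_act g (reynolds H x) = (1 / real (card H)) *\<^sub>R (\<Sum>h\<in>H. perm_act g (perm_act h x))"
    by (simp add: reynolds_def linear_scale[OF linear_perm_act] linear_sum[OF linear_perm_act])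
  also have "(\<Sum>h\<in>H. perm_act g (perm_act h x)) = (\<Sum>h\<in>H. perm_act (g \<circ> h) x)"
    by (rule sum.cong) (simp_all add: perm_act_compose perms assms(2))
  also have "\<dots> = (\<Sum>h\<in>H. perm_act h x)"
    using sum.reindex_bij_betw[OF bij, of "\<lambda>h. perm_act h x"] .
  finally show ?thesis
    by (simp add: reynolds_def)
qed

lemma feasible_Int_Fix_set_nonempty:
  assumes "feasible m A b m' B d \<noteq> {}" and "subgroup H Sym" and "H \<subseteq> G_LP m A b m' B d c"
  shows "feasible m A b m' B d \<inter> Fix_set H \<noteq> {}"
proof -
  obtain x where x: "x \<in> feasible m A b m' B d"
    using assms(1) by blast
  have "H \<noteq> {}"
    using subgroup.one_closed[OF assms(2)] by blast
  then have "reynolds H x \<in> feasible m A b m' B d"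
    using assms(3) x by (intro reynolds_mem_convex convex_feasible) (auto simp: G_LP_def)
  moreover have "reynolds H x \<in> Fix_set H"
    using perm_act_reynolds[OF assms(2)] by (simp add: Fix_set_def)
  ultimately show ?thesis
    by blast
qed

theorem theorem3:
  fixes m m' :: nat
    and A B :: "nat \<Rightarrow> real^'n::finite"
    and b d :: "nat \<Rightarrow> real"
    and c :: "real^'n"
    and H :: "('n \<Rightarrow> 'n) set"
  assumes "standard_form m A b m' B d"
    and "subgroup H (Sym\<lparr>carrier := G_Null m A m' B d c\<rparr>)"
  shows "feasible m A b m' B d \<inter> Fix_set H \<noteq> {} \<longleftrightarrow>
         subgroup H (Sym\<lparr>carrier := G_LP_c m A b m' B d c\<rparr>)"
proof -
  have Null_perms: "G_Null m A m' B d c \<subseteq> {p. p permutes UNIV}"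
    by (auto simp: G_Null_def G_Bdc_def)
  have LP_perms: "G_LP_c m A b m' B d c \<subseteq> {p. p permutes UNIV}"
    by (auto simp: G_LP_c_def G_LP_def)
  have H_Null: "H \<subseteq> G_Null m A m' B d c" and H_Sym: "subgroup H Sym"
    using assms(2) subgroup_Sym_carrier_update_iff[OF Null_perms] by simp_all
  have "feasible m A b m' B d \<inter> Fix_set H \<noteq> {} \<longleftrightarrow> H \<subseteq> G_LP_c m A b m' B d c"
  proof
    assume "feasible m A b m' B d \<inter> Fix_set H \<noteq> {}"
    then obtain x\<^sub>0 where "x\<^sub>0 \<in> feasible m A b m' B d" "\<And>h. h \<in> H \<Longrightarrow> perm_act h x\<^sub>0 = x\<^sub>0"
      by (auto simp: Fix_set_def)
    then show "H \<subseteq> G_LP_c m A b m' B d c"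
      using H_Null G_Null_fixing_feasible_point_mem_G_LP_c by blast
  next
    assume "H \<subseteq> G_LP_c m A b m' B d c"
    then have "H \<subseteq> G_LP m A b m' B d c"
      by (auto simp: G_LP_c_def)
    moreover have "feasible m A b m' B d \<noteq> {}"
      using assms(1) by (simp add: standard_form_def)
    ultimately show "feasible m A b m' B d \<inter> Fix_set H \<noteq> {}"
      using H_Sym feasible_Int_Fix_set_nonempty by blast
  qed
  also have "\<dots> \<longleftrightarrow> subgroup H (Sym\<lparr>carrier := G_LP_c m A b m' B d c\<rparr>)"
    using H_Sym subgroup_Sym_carrier_update_iff[OF LP_perms] by simp
  finally show ?thesis .
qed

end
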